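(* Let $k \geq 2$ be an integer and let $G=(V,E)$ be a $k$-connected graph with $n \geq 3$ vertices, $e$ edges, minimum degree $\delta$ and maximum degree $\Delta$. If any one of the following five conditions holds, then $G$ is Hamiltonian: [1] $$Z_1(G) \geq (n - k - 1)\Delta^2 + \frac{e^2}{2(k + 1)} + \frac{(k + 1) \Delta^3}{2 \delta};$$ [2] $$F(G) \leq (n - k - 1) \delta^3 + \frac{\delta (2 (k + 1)^2 \delta^2 - e^2)}{k + 1};$$ [3] $$F(G) \leq (n - k - 1) \delta^3 + \frac{\delta}{k + 1} \left( 2 (k + 1) \left((k + 1) \delta^2 + \frac{e^2}{n - k - 1}\right) - e^2 - 2 (k + 1) (n - k - 1) \Delta^2\right);$$ [4] $$Inv(G) \leq \frac{n - k - 1}{\Delta} + \frac{2 (k + 1)^2 \delta^2 - e^2}{(k + 1) \Delta^3};$$ [5] $$Inv(G) \leq \frac{n - k - 1}{\Delta} + \frac{1}{(k + 1) \Delta^3} \left( 2 (k + 1) \left((k + 1) \delta^2 + \frac{e^2}{n - k - 1}\right) - e^2 - 2 (k + 1) (n - k - 1) \Delta^2\right).$$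
   Context: Graphs are finite, undirected, without loops or multiple edges. $d(u)$ denotes the degree of vertex $u$; $\delta$ and $\Delta$ are the minimum and maximum degrees. The first Zagreb index is $Z_1(G)=\sum_{u\in V} d(u)^2$, the forgotten topological index is $F(G)=\sum_{u\in V} d(u)^3$, and the inverse degree is $Inv(G)=\sum_{u\in V}\frac{1}{d(u)}$. A graph is Hamiltonian if it has a cycle containing all its vertices. *)

theory Defs
  imports Main "HOL-Library.Multiset" Complex_Main
begin

definition simple_graph :: "'a set \<Rightarrow> 'a set set \<Rightarrow> bool" where
  "simple_graph V E \<longleftrightarrow> finite V \<and>
     (\<forall>e\<in>E. \<exists>u v. e = {u, v} \<and> u \<noteq> v \<and> u \<in> V \<and> v \<in> V)"

definition degree :: "'a set \<Rightarrow> 'a set set \<Rightarrow> 'a \<Rightarrow> nat" where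
  "degree V E u = card {v\<in>V. {u, v} \<in> E}"

definition min_degree :: "'a set \<Rightarrow> 'a set set \<Rightarrow> nat" where
  "min_degree V E = Min (degree V E ` V)"

definition max_degree :: "'a set \<Rightarrow> 'a set set \<Rightarrow> nat" where
  "max_degree V E = Max (degree V E ` V)"

definition zagreb1 :: "'a set \<Rightarrow> 'a set set \<Rightarrow> real" where
  "zagreb1 V E = (\<Sum>u\<in>V. real (degree V E u) ^ 2)"

definition forgotten_index :: "'a set \<Rightarrow> 'a set set \<Rightarrow> real" where
  "forgotten_index V E = (\<Sum>u\<in>V. real (degree V E u) ^ 3)"

definition inverse_degree :: "'a set \<Rightarrow> 'a set set \<Rightarrow> real" where
  "inverse_degree V E = (\<Sum>u\<in>V. 1 / real (degree V E u))"

definition graph_connected :: "'a set \<Rightarrow> 'a set set \<Rightarrow> bool" where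
  "graph_connected V E \<longleftrightarrow>
     (\<forall>u\<in>V. \<forall>v\<in>V. (\<lambda>x y. {x, y} \<in> E)\<^sup>*\<^sup>* u v)"

definition k_connected :: "'a set \<Rightarrow> 'a set set \<Rightarrow> nat \<Rightarrow> bool" where
  "k_connected V E k \<longleftrightarrow> card V > k \<and>
     (\<forall>S \<subseteq> V. card S < k \<longrightarrow> graph_connected (V - S) {e\<in>E. e \<subseteq> V - S})"

definition hamiltonian :: "'a set \<Rightarrow> 'a set set \<Rightarrow> bool" where
  "hamiltonian V E \<longleftrightarrow> (\<exists>vs. distinct vs \<and> set vs = V \<and> length vs \<ge> 3 \<and>
     (\<forall>i < length vs - 1. {vs ! i, vs ! Suc i} \<in> E) \<and> {last vs, hd vs} \<in> E)"

end

(*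
  Let C be a longest cycle of a non-Hamiltonian k-connected graph G, h a vertex off C,
  H the component of G - C containing h, and X the set of vertices of C with a neighbour
  in H.  As X separates h from the rest of C, |X| >= k.  By the maximality of C, the
  successors on C of the vertices of X lie outside X, are not adjacent to H, and no two
  of them are adjacent or have a common neighbour outside C and H.  So k of these
  successors together with one vertex of H form an independent set S of size k + 1
  (the Chvatal-Erdos argument).

  Every edge meets V - S, so the degree sum s over S satisfies
  (k + 1) delta <= s <= e <= (n - k - 1) Delta, and s < e unless every edge meets S,
  which the choice of the vertex of H and the maximality of C turn into n <= 2k + 1.
  With the AM-GM inequality for Z1, these bounds contradict each of the five conditions.
*)
theory Submission
  imports Defs
begin

section \<open>Cycles as lists\<close>

definition is_cycle :: "('a \<Rightarrow> 'a \<Rightarrow> bool) \<Rightarrow> 'a list \<Rightarrow> bool" where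
  "is_cycle R vs \<longleftrightarrow> distinct vs \<and> 3 \<le> length vs \<and> successively R vs \<and> R (last vs) (hd vs)"

definition cycle_edges :: "'a list \<Rightarrow> ('a \<times> 'a) set" where
  "cycle_edges vs = set (zip vs (rotate1 vs))"

text \<open>Unspecified for \<open>x \<notin> set vs\<close>.\<close>
definition cycle_succ :: "'a list \<Rightarrow> 'a \<Rightarrow> 'a" where
  "cycle_succ vs x = (SOME y. (x, y) \<in> cycle_edges vs)"

lemma zip_rotate1: "length xs = length ys \<Longrightarrow> zip (rotate1 xs) (rotate1 ys) = rotate1 (zip xs ys)"
  by (cases xs; cases ys) auto

lemma cycle_edges_rotate [simp]: "cycle_edges (rotate n vs) = cycle_edges vs"
  by (induction n) (simp_all add: cycle_edges_def zip_rotate1)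

lemma cycle_succ_rotate [simp]: "cycle_succ (rotate n vs) = cycle_succ vs"
  by (simp add: cycle_succ_def [abs_def])

lemma zip_distinct_pair_eq_iff:
  assumes "distinct xs" "distinct ys" "(x, y) \<in> set (zip xs ys)" "(x', y') \<in> set (zip xs ys)"
  shows "x = x' \<longleftrightarrow> y = y'"
  using assms by (auto simp: in_set_zip nth_eq_iff_index_eq)

lemma cycle_edges_succ: "x \<in> set vs \<Longrightarrow> (x, cycle_succ vs x) \<in> cycle_edges vs"
proof -
  assume "x \<in> set vs"
  then obtain i where "i < length vs" "vs ! i = x"
    by (auto simp: in_set_conv_nth)
  then have "(x, rotate1 vs ! i) \<in> cycle_edges vs"
    unfolding cycle_edges_def in_set_zip by auto
  then show ?thesis
    unfolding cycle_succ_def by (rule someI)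
qed

lemma cycle_succ_eqI: "distinct vs \<Longrightarrow> (x, y) \<in> cycle_edges vs \<Longrightarrow> cycle_succ vs x = y"
  by (metis cycle_edges_def cycle_edges_succ distinct1_rotate set_zip_leftD zip_distinct_pair_eq_iff)

lemma cycle_succ_in_set: "x \<in> set vs \<Longrightarrow> cycle_succ vs x \<in> set vs"
  by (metis cycle_edges_def cycle_edges_succ set_rotate1 set_zip_rightD)

lemma inj_on_cycle_succ: "distinct vs \<Longrightarrow> inj_on (cycle_succ vs) (set vs)"
  by (rule inj_onI) (metis cycle_edges_def cycle_edges_succ distinct1_rotate zip_distinct_pair_eq_iff)

lemma cycle_succ_last:
  assumes "distinct vs" "vs \<noteq> []"
  shows "cycle_succ vs (last vs) = hd vs"
proof (rule cycle_succ_eqI [OF assms(1)])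
  have "rotate1 vs ! (length vs - 1) = hd vs"
    using assms(2) by (simp add: nth_rotate1 hd_conv_nth)
  then show "(last vs, hd vs) \<in> cycle_edges vs"
    using assms(2) unfolding cycle_edges_def in_set_zip
    by (intro exI [of _ "length vs - 1"]) (simp add: last_conv_nth)
qed

lemma cycle_succ_rotate_last:
  assumes "distinct vs" "vs \<noteq> []"
  shows "cycle_succ vs (last (rotate n vs)) = hd (rotate n vs)"
  using cycle_succ_last [of "rotate n vs"] assms by simp

lemma rotate_ending_at:
  assumes "distinct vs" "x \<in> set vs"
  obtains n where "last (rotate n vs) = x" "hd (rotate n vs) = cycle_succ vs x"
proof -
  obtain p q where vs: "vs = (p @ [x]) @ q"
    using split_list [OF assms(2)] by auto
  define n where "n = length (p @ [x])"
  have "rotate n vs = q @ p @ [x]"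
    unfolding n_def vs by (rule rotate_append)
  then have "last (rotate n vs) = x"
    by simp
  with cycle_succ_rotate_last [OF assms(1), of n] vs show thesis
    by (intro that) auto
qed

lemma split_at_cycle_succ:
  assumes "distinct vs" "x \<in> set vs" "x \<noteq> last vs"
  obtains P1 P2 where "vs = P1 @ P2" "P1 \<noteq> []" "P2 \<noteq> []" "last P1 = x" "hd P2 = cycle_succ vs x"
proof -
  obtain p q where vs: "vs = (p @ [x]) @ q"
    using split_list [OF assms(2)] by auto
  with assms(3) have "q \<noteq> []"
    by auto
  define n where "n = length (p @ [x])"
  have "rotate n vs = q @ p @ [x]"
    unfolding n_def vs by (rule rotate_append)
  then have "cycle_succ vs x = hd q"
    using cycle_succ_rotate_last [OF assms(1), of n] vs \<open>q \<noteq> []\<close> by auto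
  with vs \<open>q \<noteq> []\<close> show thesis
    by (intro that [of "p @ [x]" q]) auto
qed

lemma is_cycle_rotate1:
  assumes "is_cycle R vs"
  shows "is_cycle R (rotate1 vs)"
proof (cases vs)
  case (Cons a xs)
  with assms have "xs \<noteq> []"
    by (auto simp: is_cycle_def)
  with assms Cons show ?thesis
    by (auto simp: is_cycle_def successively_append_iff successively_Cons)
qed (use assms in simp)

lemma is_cycle_rotate: "is_cycle R vs \<Longrightarrow> is_cycle R (rotate n vs)"
  by (induction n) (simp_all add: is_cycle_rotate1)

lemma is_cycle_succ:
  assumes "is_cycle R vs" "x \<in> set vs"
  shows "R x (cycle_succ vs x)"
proof -
  obtain n where "last (rotate n vs) = x" "hd (rotate n vs) = cycle_succ vs x"
    using rotate_ending_at assms is_cycle_def by metis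
  then show ?thesis
    using is_cycle_rotate [OF assms(1), of n] by (simp add: is_cycle_def)
qed

lemma successively_Cons_snoc:
  assumes "successively R Q" "Q \<noteq> []" "R x (hd Q)" "R (last Q) y"
  shows "successively R (x # Q @ [y])"
  using assms by (simp add: successively_Cons successively_append_iff hd_append)

lemma is_cycle_append:
  assumes "is_cycle R vs" "distinct Q" "set Q \<inter> set vs = {}"
    and "successively R (last vs # Q @ [hd vs])"
  shows "is_cycle R (vs @ Q)"
  using assms by (cases "Q = []") (auto simp: is_cycle_def successively_append_iff successively_Cons hd_append)

lemma is_cycle_reroute:
  assumes "symp R" "is_cycle R (P1 @ P2)" "P1 \<noteq> []" "P2 \<noteq> []"
    and "distinct Q" "distinct Q'"
    and "set Q \<inter> set (P1 @ P2) = {}" "set Q' \<inter> set (P1 @ P2) = {}" "set Q \<inter> set Q' = {}"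
    and "successively R (hd P1 # Q @ [hd P2])" "successively R (last P2 # Q' @ [last P1])"
  shows "is_cycle R (rev P1 @ Q @ P2 @ Q')"
proof -
  have "successively R (rev P1)"
    using assms(1,2) by (auto simp: is_cycle_def successively_append_iff elim: successively_mono dest: sympD)
  then show ?thesis
    using assms(2-) by (cases "Q = []"; cases "Q' = []")
      (auto simp: is_cycle_def successively_append_iff successively_Cons hd_rev last_rev)
qed

lemma rtranclp_path:
  assumes "R\<^sup>*\<^sup>* u v"
  obtains p where "p \<noteq> []" "distinct p" "successively R p" "hd p = u" "last p = v"
    "set p \<subseteq> {z. R\<^sup>*\<^sup>* u z}"
  using assms
proof (induction arbitrary: thesis rule: rtranclp_induct)
  case base
  show ?case
    by (rule base [of "[u]"]) auto
next
  case (step y z)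
  obtain p where p: "p \<noteq> []" "distinct p" "successively R p" "hd p = u" "last p = y"
    "set p \<subseteq> {z. R\<^sup>*\<^sup>* u z}"
    using step.IH .
  show ?case
  proof (cases "z \<in> set p")
    case True
    then obtain p1 p2 where p12: "p = (p1 @ [z]) @ p2"
      using split_list by fastforce
    have "hd (p1 @ [z]) = u"
      using p(4) p12 by (cases p1) auto
    with p p12 show ?thesis
      by (intro step.prems [of "p1 @ [z]"]) (auto simp: successively_append_iff)
  next
    case False
    show ?thesis
      by (rule step.prems [of "p @ [z]"])
        (use p False step.hyps in \<open>auto simp: successively_append_iff\<close>)
  qed
qed

lemma ex_longest_distinct_list:
  assumes "finite A" "P xs" "\<And>ys. P ys \<Longrightarrow> distinct ys \<and> set ys \<subseteq> A"
  obtains ys where "P ys" "\<And>zs. P zs \<Longrightarrow> length zs \<le> length ys"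
proof -
  have "length ys < Suc (card A)" if "P ys" for ys
    using assms(1) assms(3) [OF that] by (metis card_mono distinct_card less_Suc_eq_le)
  then show thesis
    using Lattices_Big.ex_has_greatest_nat [of P xs length] assms(2) that by blast
qed

section \<open>Finite simple graphs\<close>

definition independent_set :: "'a set set \<Rightarrow> 'a set \<Rightarrow> bool" where
  "independent_set E S \<longleftrightarrow> (\<forall>a\<in>S. \<forall>b\<in>S. {a, b} \<notin> E)"

locale sgraph =
  fixes V :: "'a set" and E :: "'a set set"
  assumes simple: "simple_graph V E"
begin

abbreviation adj :: "'a \<Rightarrow> 'a \<Rightarrow> bool" where
  "adj x y \<equiv> {x, y} \<in> E"

lemma finite_V: "finite V"
  using simple by (simp add: simple_graph_def)

lemma edgeE:
  assumes "e \<in> E"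
  obtains u v where "e = {u, v}" "u \<noteq> v" "u \<in> V" "v \<in> V"
  using simple assms unfolding simple_graph_def by blast

lemma finite_E: "finite E"
proof -
  have "E \<subseteq> Pow V"
    by (auto elim: edgeE)
  then show ?thesis
    using finite_V finite_subset by blast
qed

lemma adj_sym: "symp adj"
  by (rule sympI) (simp add: insert_commute)

lemma adj_commute: "adj x y \<longleftrightarrow> adj y x"
  by (simp add: insert_commute)

lemma adj_in_V: "adj x y \<Longrightarrow> x \<in> V \<and> y \<in> V"
  by (erule edgeE) (auto simp: doubleton_eq_iff)

lemma adj_irrefl: "\<not> adj x x"
  by (auto elim: edgeE simp: doubleton_eq_iff)

lemma hamiltonian_if_spanning_cycle:
  assumes "is_cycle adj C" "set C = V"
  shows "hamiltonian V E"
  using assms unfolding hamiltonian_def is_cycle_def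
  by (intro exI [of _ C]) (auto intro: successively_nth)

lemma two_neighbours:
  assumes "2 \<le> k" "k_connected V E k" "3 \<le> card V" "y \<in> V"
  obtains a b where "a \<noteq> b" "adj y a" "adj y b"
proof -
  define N where "N = {v\<in>V. adj y v}"
  have "\<exists>a b. a \<noteq> b \<and> adj y a \<and> adj y b"
  proof (rule ccontr)
    assume "\<not> ?thesis"
    then have "card N \<le> 1"
      using finite_V by (auto simp: N_def card_le_Suc0_iff_eq)
    then have connected: "graph_connected (V - N) {e\<in>E. e \<subseteq> V - N}"
      using assms(1,2) unfolding k_connected_def N_def by auto
    have "y \<notin> N"
      using adj_irrefl by (simp add: N_def)
    have "card (insert y N) < card V"
      using \<open>card N \<le> 1\<close> assms(3) finite_V by (simp add: N_def card_insert_if)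
    moreover have "finite (insert y N)"
      using finite_V by (simp add: N_def)
    ultimately have "\<not> V \<subseteq> insert y N"
      by (metis card_mono leD)
    then obtain z where "z \<in> V" "z \<notin> insert y N"
      by blast
    with connected assms(4) \<open>y \<notin> N\<close>
    have "(\<lambda>x w. {x, w} \<in> {e\<in>E. e \<subseteq> V - N})\<^sup>*\<^sup>* y z" "z \<noteq> y"
      unfolding graph_connected_def by auto
    then obtain w where "{y, w} \<in> E" "w \<in> V - N"
      by (cases rule: converse_rtranclpE) auto
    then show False
      by (simp add: N_def)
  qed
  then show thesis
    using that by blast
qed

lemma min_degree_le_degree: "u \<in> V \<Longrightarrow> min_degree V E \<le> degree V E u"
  unfolding min_degree_def using finite_V by simp

lemma degree_le_max_degree: "u \<in> V \<Longrightarrow> degree V E u \<le> max_degree V E"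
  unfolding max_degree_def using finite_V by simp

lemma min_degree_le_max_degree:
  assumes "V \<noteq> {}"
  shows "min_degree V E \<le> max_degree V E"
  using assms min_degree_le_degree degree_le_max_degree le_trans by blast

lemma two_le_min_degree:
  assumes "2 \<le> k" "k_connected V E k" "3 \<le> card V"
  shows "2 \<le> min_degree V E"
proof -
  have "2 \<le> degree V E y" if y: "y \<in> V" for y
  proof -
    obtain a b where "a \<noteq> b" "adj y a" "adj y b"
      by (rule two_neighbours [OF assms y])
    then have "{a, b} \<subseteq> {v\<in>V. adj y v}"
      using adj_in_V by auto
    then have "card {a, b} \<le> card {v\<in>V. adj y v}"
      by (rule card_mono [rotated]) (simp add: finite_V)
    with \<open>a \<noteq> b\<close> show ?thesis
      by (simp add: degree_def)
  qed
  moreover have "V \<noteq> {}"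
    using assms(3) by auto
  ultimately show ?thesis
    unfolding min_degree_def using finite_V by simp
qed

lemma cycle_exists:
  assumes "V \<noteq> {}" and two: "\<And>y. y \<in> V \<Longrightarrow> \<exists>a b. a \<noteq> b \<and> adj y a \<and> adj y b"
  obtains C where "is_cycle adj C" "set C \<subseteq> V"
proof -
  define is_path where "is_path p \<longleftrightarrow> p \<noteq> [] \<and> distinct p \<and> successively adj p \<and> set p \<subseteq> V" for p
  obtain v where "v \<in> V"
    using assms(1) by blast
  then have "is_path [v]"
    by (simp add: is_path_def)
  then obtain p where p: "is_path p" and longest: "\<And>q. is_path q \<Longrightarrow> length q \<le> length p"
    using ex_longest_distinct_list [OF finite_V, of is_path] unfolding is_path_def by blast
  then obtain v0 rest where p_eq: "p = v0 # rest"
    by (cases p) (auto simp: is_path_def)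
  have on_path: "w \<in> set p" if "adj v0 w" for w
  proof (rule ccontr)
    assume "w \<notin> set p"
    then have "is_path (w # p)"
      using p that p_eq adj_in_V adj_sym by (auto simp: is_path_def successively_Cons dest: sympD)
    then show False
      using longest [of "w # p"] by simp
  qed
  obtain w where w: "adj v0 w" "w \<noteq> hd rest"
    using two [of v0] p p_eq by (auto simp: is_path_def)
  then have "w \<in> set rest"
    using on_path adj_irrefl p_eq by fastforce
  then obtain a1 b1 where rest: "rest = a1 @ w # b1"
    by (meson split_list)
  with w(2) have "a1 \<noteq> []"
    by auto
  define C where "C = v0 # a1 @ [w]"
  have "p = C @ b1"
    using p_eq rest by (simp add: C_def)
  with p have "distinct C" "successively adj C" "set C \<subseteq> V"
    by (auto simp: is_path_def successively_append_iff)
  moreover have "3 \<le> length C"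
    using \<open>a1 \<noteq> []\<close> by (cases a1) (simp_all add: C_def)
  moreover have "adj (last C) (hd C)"
    using w(1) by (simp add: C_def adj_commute)
  ultimately show thesis
    using that by (simp add: is_cycle_def)
qed

lemma longest_cycle_exists:
  assumes "is_cycle adj C0" "set C0 \<subseteq> V"
  obtains C where "is_cycle adj C" "set C \<subseteq> V"
    "\<And>D. is_cycle adj D \<Longrightarrow> set D \<subseteq> V \<Longrightarrow> length D \<le> length C"
proof -
  obtain C where "is_cycle adj C \<and> set C \<subseteq> V"
    and "\<And>D. is_cycle adj D \<and> set D \<subseteq> V \<Longrightarrow> length D \<le> length C"
    using ex_longest_distinct_list [OF finite_V, of "\<lambda>C. is_cycle adj C \<and> set C \<subseteq> V" C0] assms
    by (auto simp: is_cycle_def)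
  then show thesis
    using that by blast
qed

lemma finite_neighbours: "finite {v\<in>V. adj u v}"
  using finite_V by simp

lemma edges_meeting_eq_image:
  "{e\<in>E. e \<inter> A \<noteq> {}} = (\<lambda>(u, v). {u, v}) ` (SIGMA u:A. {v\<in>V. adj u v})"
proof -
  have "e \<in> (\<lambda>(u, v). {u, v}) ` (SIGMA u:A. {v\<in>V. adj u v})" if e: "e \<in> E" "e \<inter> A \<noteq> {}" for e
  proof -
    obtain a b where ab: "e = {a, b}" "a \<in> V" "b \<in> V"
      using e(1) by (metis edgeE)
    show ?thesis
    proof (cases "a \<in> A")
      case True
      with e ab show ?thesis
        by (intro image_eqI [of _ _ "(a, b)"]) auto
    next
      case False
      with e ab have "b \<in> A" "adj b a"
        by (auto simp: adj_commute)
      with ab show ?thesis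
        by (intro image_eqI [of _ _ "(b, a)"]) (auto simp: insert_commute)
    qed
  qed
  then show ?thesis
    by auto
qed

lemma card_edges_meeting_le:
  assumes "A \<subseteq> V"
  shows "card {e\<in>E. e \<inter> A \<noteq> {}} \<le> (\<Sum>u\<in>A. degree V E u)"
proof -
  have "finite A"
    using assms finite_V finite_subset by blast
  then have "finite (SIGMA u:A. {v\<in>V. adj u v})"
    using finite_neighbours by (rule finite_SigmaI)
  then have "card {e\<in>E. e \<inter> A \<noteq> {}} \<le> card (SIGMA u:A. {v\<in>V. adj u v})"
    unfolding edges_meeting_eq_image by (rule card_image_le)
  also have "\<dots> = (\<Sum>u\<in>A. degree V E u)"
    using \<open>finite A\<close> finite_neighbours by (simp add: degree_def card_SigmaI)
  finally show ?thesis .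
qed

lemma card_edges_meeting_independent:
  assumes "A \<subseteq> V" "independent_set E A"
  shows "card {e\<in>E. e \<inter> A \<noteq> {}} = (\<Sum>u\<in>A. degree V E u)"
proof -
  have "finite A"
    using assms finite_V finite_subset by blast
  have "\<not> adj u u'" if "u \<in> A" "u' \<in> A" for u u'
    using assms(2) that by (simp add: independent_set_def)
  then have "inj_on (\<lambda>(u, v). {u, v}) (SIGMA u:A. {v\<in>V. adj u v})"
    unfolding inj_on_def by (auto simp: doubleton_eq_iff)
  then have "card {e\<in>E. e \<inter> A \<noteq> {}} = card (SIGMA u:A. {v\<in>V. adj u v})"
    unfolding edges_meeting_eq_image by (rule card_image)
  also have "\<dots> = (\<Sum>u\<in>A. degree V E u)"
    using \<open>finite A\<close> finite_neighbours by (simp add: degree_def card_SigmaI)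
  finally show ?thesis .
qed

lemma degree_sum_independent_le:
  assumes "S \<subseteq> V" "independent_set E S"
  shows "(\<Sum>u\<in>S. real (degree V E u)) \<le> card E"
proof -
  have "card {e\<in>E. e \<inter> S \<noteq> {}} \<le> card E"
    by (rule card_mono [OF finite_E Collect_subset])
  then show ?thesis
    using card_edges_meeting_independent [OF assms] by (simp flip: of_nat_sum)
qed

lemma degree_sum_independent_less:
  assumes "S \<subseteq> V" "independent_set E S" "adj a b" "a \<notin> S" "b \<notin> S"
  shows "(\<Sum>u\<in>S. real (degree V E u)) < card E"
proof -
  have "{a, b} \<notin> {e\<in>E. e \<inter> S \<noteq> {}}"
    using assms(4,5) by simp
  with assms(3) have "{e\<in>E. e \<inter> S \<noteq> {}} \<subset> E"
    using Collect_subset by blast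
  then have "card {e\<in>E. e \<inter> S \<noteq> {}} < card E"
    by (rule psubset_card_mono [OF finite_E])
  then show ?thesis
    using card_edges_meeting_independent [OF assms(1,2)] by (simp flip: of_nat_sum)
qed

lemma card_edges_le_degree_sum_compl:
  assumes "independent_set E S"
  shows "card E \<le> (\<Sum>u\<in>V - S. real (degree V E u))"
proof -
  have "e \<inter> (V - S) \<noteq> {}" if "e \<in> E" for e
  proof -
    obtain a b where "e = {a, b}" "a \<in> V" "b \<in> V"
      using \<open>e \<in> E\<close> by (metis edgeE)
    with that assms show ?thesis
      unfolding independent_set_def by blast
  qed
  then have "{e\<in>E. e \<inter> (V - S) \<noteq> {}} = E"
    by blast
  then show ?thesis
    using card_edges_meeting_le [of "V - S"] by (simp flip: of_nat_sum)
qed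

lemma degree_sum_ge:
  assumes "A \<subseteq> V"
  shows "card A * real (min_degree V E) \<le> (\<Sum>u\<in>A. real (degree V E u))"
  by (rule sum_bounded_below) (use assms min_degree_le_degree in auto)

lemma degree_sum_le:
  assumes "A \<subseteq> V"
  shows "(\<Sum>u\<in>A. real (degree V E u)) \<le> card A * real (max_degree V E)"
  by (rule sum_bounded_above) (use assms degree_le_max_degree in auto)

lemma zagreb1_le:
  assumes "S \<subseteq> V"
  shows "zagreb1 V E \<le> max_degree V E * (\<Sum>u\<in>S. real (degree V E u))
    + card (V - S) * real (max_degree V E) ^ 2"
proof -
  have split: "zagreb1 V E = (\<Sum>u\<in>V - S. real (degree V E u) ^ 2) + (\<Sum>u\<in>S. real (degree V E u) ^ 2)"
    unfolding zagreb1_def using sum.subset_diff [OF assms finite_V] by simp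
  have "(\<Sum>u\<in>V - S. real (degree V E u) ^ 2) \<le> card (V - S) * real (max_degree V E) ^ 2"
    by (rule sum_bounded_above) (simp add: power_mono degree_le_max_degree)
  moreover have "real (degree V E u) ^ 2 \<le> max_degree V E * real (degree V E u)" if "u \<in> V" for u
    using degree_le_max_degree [OF that] by (simp add: power2_eq_square mult_right_mono)
  then have "(\<Sum>u\<in>S. real (degree V E u) ^ 2) \<le> (\<Sum>u\<in>S. max_degree V E * real (degree V E u))"
    using assms by (intro sum_mono) auto
  ultimately show ?thesis
    unfolding split sum_distrib_left by linarith
qed

lemma forgotten_index_ge_card: "card V * real (min_degree V E) ^ 3 \<le> forgotten_index V E"
  unfolding forgotten_index_def
  by (rule sum_bounded_below) (simp add: power_mono min_degree_le_degree)

lemma forgotten_index_ge_independent: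
  assumes "S \<subseteq> V" "independent_set E S"
  shows "card S * real (min_degree V E) ^ 3 + real (min_degree V E) ^ 2 * card E \<le> forgotten_index V E"
proof -
  have split: "forgotten_index V E
      = (\<Sum>u\<in>V - S. real (degree V E u) ^ 3) + (\<Sum>u\<in>S. real (degree V E u) ^ 3)"
    unfolding forgotten_index_def using sum.subset_diff [OF assms(1) finite_V] by simp
  have "card S * real (min_degree V E) ^ 3 \<le> (\<Sum>u\<in>S. real (degree V E u) ^ 3)"
    by (rule sum_bounded_below) (use assms(1) in \<open>auto intro: power_mono min_degree_le_degree\<close>)
  moreover have "real (min_degree V E) ^ 2 * real (degree V E u) \<le> real (degree V E u) ^ 3"
    if "u \<in> V" for u
  proof -
    have "real (min_degree V E) ^ 2 \<le> real (degree V E u) ^ 2"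
      using min_degree_le_degree [OF that] by (simp add: power_mono)
    then show ?thesis
      by (simp add: power2_eq_square power3_eq_cube mult_right_mono)
  qed
  then have "real (min_degree V E) ^ 2 * (\<Sum>u\<in>V - S. real (degree V E u))
      \<le> (\<Sum>u\<in>V - S. real (degree V E u) ^ 3)"
    unfolding sum_distrib_left by (intro sum_mono) auto
  moreover have "real (min_degree V E) ^ 2 * card E
      \<le> real (min_degree V E) ^ 2 * (\<Sum>u\<in>V - S. real (degree V E u))"
    using card_edges_le_degree_sum_compl [OF assms(2)] by (rule mult_left_mono) simp
  ultimately show ?thesis
    unfolding split by linarith
qed

lemma inverse_degree_ge:
  assumes "0 < min_degree V E"
  shows "card V / real (max_degree V E) \<le> inverse_degree V E"
proof -
  have "card V * (1 / real (max_degree V E)) \<le> inverse_degree V E"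
    unfolding inverse_degree_def
  proof (rule sum_bounded_below)
    fix u
    assume "u \<in> V"
    then have "0 < real (degree V E u)" "real (degree V E u) \<le> max_degree V E"
      using assms min_degree_le_degree [of u] degree_le_max_degree [of u] by auto
    then show "1 / real (max_degree V E) \<le> 1 / real (degree V E u)"
      by (rule frac_le [rotated 2]) simp_all
  qed
  then show ?thesis
    by simp
qed

end

section \<open>Longest cycles in non-Hamiltonian graphs\<close>

locale longest_cycle = sgraph +
  fixes C :: "'a list" and h :: 'a
  assumes cycle: "is_cycle adj C"
    and cycle_in_V: "set C \<subseteq> V"
    and longest: "\<And>D. is_cycle adj D \<Longrightarrow> set D \<subseteq> V \<Longrightarrow> length D \<le> length C"
    and h_in_V: "h \<in> V"
    and h_off_cycle: "h \<notin> set C"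
begin

abbreviation succ :: "'a \<Rightarrow> 'a" where
  "succ \<equiv> cycle_succ C"

abbreviation adj_off :: "'a \<Rightarrow> 'a \<Rightarrow> bool" where
  "adj_off x y \<equiv> adj x y \<and> x \<notin> set C \<and> y \<notin> set C"

definition component :: "'a set" where
  "component = {v. adj_off\<^sup>*\<^sup>* h v}"

definition attachments :: "'a set" where
  "attachments = {c \<in> set C. \<exists>u\<in>component. adj c u}"

lemma distinct_C: "distinct C"
  using cycle by (simp add: is_cycle_def)

lemma h_in_component: "h \<in> component"
  by (simp add: component_def)

lemma component_off_cycle:
  assumes "v \<in> component"
  shows "v \<in> V" "v \<notin> set C"
proof -
  have "adj_off\<^sup>*\<^sup>* h v"
    using assms by (simp add: component_def)
  then have "v \<in> V \<and> v \<notin> set C"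
    by (induction rule: rtranclp_induct) (use h_in_V h_off_cycle adj_in_V in auto)
  then show "v \<in> V" "v \<notin> set C"
    by auto
qed

lemma component_closed:
  assumes "u \<in> component" "adj u v" "v \<notin> set C"
  shows "v \<in> component"
  using assms component_off_cycle(2) [OF assms(1)]
  by (auto simp: component_def intro: rtranclp.rtrancl_into_rtrancl)

lemma component_path:
  assumes "u \<in> component" "u' \<in> component"
  obtains Q where "Q \<noteq> []" "distinct Q" "successively adj Q" "hd Q = u" "last Q = u'"
    "set Q \<subseteq> component"
proof -
  have "symp adj_off"
    by (rule sympI) (simp add: adj_commute)
  have reach: "adj_off\<^sup>*\<^sup>* h u" "adj_off\<^sup>*\<^sup>* h u'"
    using assms by (simp_all add: component_def)
  have "adj_off\<^sup>*\<^sup>* u h"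
    using sympD [OF symp_rtranclp [OF \<open>symp adj_off\<close>] reach(1)] .
  then have "adj_off\<^sup>*\<^sup>* u u'"
    using reach(2) by (rule rtranclp_trans)
  then obtain Q where Q: "Q \<noteq> []" "distinct Q" "successively adj_off Q" "hd Q = u" "last Q = u'"
    "set Q \<subseteq> {z. adj_off\<^sup>*\<^sup>* u z}"
    by (rule rtranclp_path)
  have "set Q \<subseteq> component"
    using Q(6) reach(1) by (auto simp: component_def)
  moreover have "successively adj Q"
    using Q(3) by (rule successively_mono) simp
  ultimately show thesis
    using that Q by blast
qed

lemma cycle_rotation_ending_at:
  assumes "x \<in> set C"
  obtains ws where "is_cycle adj ws" "set ws = set C" "length ws = length C"
    "cycle_succ ws = succ" "last ws = x" "hd ws = succ x"
proof -
  obtain n where "last (rotate n C) = x" "hd (rotate n C) = succ x"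
    using rotate_ending_at [OF distinct_C assms] .
  then show thesis
    using that [of "rotate n C"] is_cycle_rotate [OF cycle] by simp
qed

lemma succ_of_attachment:
  assumes "x \<in> attachments"
  shows "succ x \<notin> attachments"
proof
  txt \<open>Otherwise a path through the component joins \<open>x\<close> to \<open>succ x\<close> and lengthens \<open>C\<close>.\<close>
  assume "succ x \<in> attachments"
  have "x \<in> set C"
    using assms by (simp add: attachments_def)
  then obtain ws where ws: "is_cycle adj ws" "set ws = set C" "length ws = length C"
    "cycle_succ ws = succ" "last ws = x" "hd ws = succ x"
    by (rule cycle_rotation_ending_at)
  obtain u u' where u: "u \<in> component" "adj x u" "u' \<in> component" "adj (succ x) u'"
    using assms \<open>succ x \<in> attachments\<close> by (auto simp: attachments_def)
  obtain Q where Q: "Q \<noteq> []" "distinct Q" "successively adj Q" "hd Q = u" "last Q = u'"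
    "set Q \<subseteq> component"
    using component_path [OF u(1,3)] .
  have off: "set Q \<inter> set ws = {}" "set Q \<subseteq> V"
    using Q(6) component_off_cycle ws(2) by auto
  have "successively adj (last ws # Q @ [hd ws])"
    using successively_Cons_snoc [OF Q(3,1)] Q(4,5) u(2,4) ws(5,6) by (simp add: adj_commute)
  with ws(1) Q(2) off(1) have "is_cycle adj (ws @ Q)"
    by (rule is_cycle_append)
  moreover have "set (ws @ Q) \<subseteq> V"
    using ws(2) cycle_in_V off(2) by auto
  ultimately have "length (ws @ Q) \<le> length C"
    by (rule longest)
  then show False
    using Q(1) ws(3) by simp
qed

lemma cycle_split_between:
  assumes "x1 \<in> set C" "x2 \<in> set C" "x1 \<noteq> x2"
  obtains P1 P2 where "is_cycle adj (P1 @ P2)" "set (P1 @ P2) = set C" "length (P1 @ P2) = length C"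
    "P1 \<noteq> []" "P2 \<noteq> []" "hd P1 = succ x1" "last P1 = x2" "hd P2 = succ x2" "last P2 = x1"
proof -
  obtain ws where ws: "is_cycle adj ws" "set ws = set C" "length ws = length C"
    "cycle_succ ws = succ" "last ws = x1" "hd ws = succ x1"
    using cycle_rotation_ending_at [OF assms(1)] .
  have "distinct ws" "x2 \<in> set ws" "x2 \<noteq> last ws"
    using ws(1,2,5) assms(2,3) by (auto simp: is_cycle_def)
  then obtain P1 P2 where "ws = P1 @ P2" "P1 \<noteq> []" "P2 \<noteq> []" "last P1 = x2"
    "hd P2 = cycle_succ ws x2"
    by (rule split_at_cycle_succ)
  with ws show thesis
    by (intro that) auto
qed

lemma no_detour_between_succs:
  assumes x: "x1 \<in> attachments" "x2 \<in> attachments" "x1 \<noteq> x2"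
    and Q: "distinct Q" "set Q \<subseteq> V - set C - component"
      "successively adj (succ x1 # Q @ [succ x2])"
  shows False
proof -
  have "x1 \<in> set C" "x2 \<in> set C"
    using x by (auto simp: attachments_def)
  then obtain P1 P2 where P: "is_cycle adj (P1 @ P2)" "set (P1 @ P2) = set C"
    "length (P1 @ P2) = length C" "P1 \<noteq> []" "P2 \<noteq> []"
    "hd P1 = succ x1" "last P1 = x2" "hd P2 = succ x2" "last P2 = x1"
    using x(3) by (rule cycle_split_between)
  obtain u1 u2 where u: "u1 \<in> component" "adj x1 u1" "u2 \<in> component" "adj x2 u2"
    using x by (auto simp: attachments_def)
  obtain Q' where Q': "Q' \<noteq> []" "distinct Q'" "successively adj Q'" "hd Q' = u1" "last Q' = u2"
    "set Q' \<subseteq> component"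
    using component_path [OF u(1,3)] .
  have off: "set Q' \<subseteq> V - set C"
    using Q'(6) component_off_cycle by auto
  txt \<open>Go back along \<open>C\<close> from \<open>x2\<close> to \<open>succ x1\<close>, through \<open>Q\<close> to \<open>succ x2\<close>, forward
    along \<open>C\<close> to \<open>x1\<close> and back to \<open>x2\<close> through the component.\<close>
  have disjoint: "set Q \<inter> set (P1 @ P2) = {}" "set Q' \<inter> set (P1 @ P2) = {}" "set Q \<inter> set Q' = {}"
    using Q(2) Q'(6) off P(2) by auto
  have "successively adj (hd P1 # Q @ [hd P2])"
    using Q(3) P(6,8) by simp
  moreover have "successively adj (last P2 # Q' @ [last P1])"
    using successively_Cons_snoc [OF Q'(3,1)] Q'(4,5) u(2,4) P(7,9) by (simp add: adj_commute)
  ultimately have "is_cycle adj (rev P1 @ Q @ P2 @ Q')"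
    using is_cycle_reroute [OF adj_sym P(1,4,5) Q(1) Q'(2) disjoint] by blast
  moreover have "set (rev P1 @ Q @ P2 @ Q') \<subseteq> V"
    using P(2) cycle_in_V Q(2) off by auto
  ultimately have "length (rev P1 @ Q @ P2 @ Q') \<le> length C"
    by (rule longest)
  moreover have "length (rev P1 @ Q @ P2 @ Q') = length C + length Q + length Q'"
    using P(3) by simp
  moreover have "0 < length Q'"
    using Q'(1) by simp
  ultimately show False
    by linarith
qed

lemma succs_of_attachments_nonadjacent:
  assumes "x1 \<in> attachments" "x2 \<in> attachments" "x1 \<noteq> x2"
  shows "\<not> adj (succ x1) (succ x2)"
  using no_detour_between_succs [OF assms, of "[]"] by auto

lemma succs_of_attachments_no_common_neighbour:
  assumes "x1 \<in> attachments" "x2 \<in> attachments" "x1 \<noteq> x2"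
    and "y \<in> V" "y \<notin> set C" "y \<notin> component"
  shows "\<not> (adj (succ x1) y \<and> adj y (succ x2))"
  using no_detour_between_succs [OF assms(1-3), of "[y]"] assms(4-) by auto

lemma succ_attachmentsD:
  assumes "z \<in> succ ` attachments"
  shows "z \<in> set C" "z \<notin> attachments"
  using assms succ_of_attachment cycle_succ_in_set by (auto simp: attachments_def)

lemma card_attachments_ge:
  assumes "k_connected V E k"
  shows "k \<le> card attachments"
proof (rule ccontr)
  txt \<open>Removing fewer than \<open>k\<close> attachments would separate \<open>h\<close> from the rest of \<open>C\<close>.\<close>
  assume "\<not> k \<le> card attachments"
  moreover have "attachments \<subseteq> V"
    using cycle_in_V by (auto simp: attachments_def)
  ultimately have connected: "graph_connected (V - attachments) {e\<in>E. e \<subseteq> V - attachments}"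
    using assms unfolding k_connected_def by simp
  obtain c0 where "c0 \<in> set C"
    using cycle by (cases C) (auto simp: is_cycle_def)
  then obtain c where c: "c \<in> set C" "c \<notin> attachments"
    using succ_attachmentsD by blast
  have "h \<notin> attachments"
    using h_off_cycle by (simp add: attachments_def)
  with connected c h_in_V cycle_in_V
  have "(\<lambda>x y. {x, y} \<in> {e\<in>E. e \<subseteq> V - attachments})\<^sup>*\<^sup>* h c"
    unfolding graph_connected_def by blast
  then have "c \<in> component"
  proof (induction rule: rtranclp_induct)
    case base
    show ?case
      by (rule h_in_component)
  next
    case (step y z)
    then have "adj y z" "z \<notin> attachments"
      by auto
    with step.IH have "z \<notin> set C"
      by (auto simp: attachments_def adj_commute)
    with step.IH \<open>adj y z\<close> show ?case
      by (rule component_closed)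
  qed
  with c(1) component_off_cycle(2) show False
    by blast
qed

lemma insert_succ_attachments:
  assumes "Z \<subseteq> succ ` attachments" "g \<in> component"
  shows "insert g Z \<subseteq> V" "card (insert g Z) = card Z + 1" "independent_set E (insert g Z)"
proof -
  have Z_C: "Z \<subseteq> set C"
    using assms(1) succ_attachmentsD by blast
  then show "insert g Z \<subseteq> V"
    using assms(2) cycle_in_V component_off_cycle(1) by blast
  have "g \<notin> Z"
    using assms(2) Z_C component_off_cycle(2) by blast
  then show "card (insert g Z) = card Z + 1"
    using finite_subset [OF Z_C] by simp
  have "\<not> adj g z" if "z \<in> Z" for z
  proof -
    have "z \<in> set C" "z \<notin> attachments"
      using succ_attachmentsD assms(1) that by auto
    with assms(2) show ?thesis
      by (auto simp: attachments_def adj_commute)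
  qed
  moreover have "\<not> adj a b" if ab: "a \<in> Z" "b \<in> Z" for a b
  proof -
    obtain x1 x2 where "x1 \<in> attachments" "x2 \<in> attachments" "a = succ x1" "b = succ x2"
      using assms(1) ab by blast
    then show ?thesis
      using succs_of_attachments_nonadjacent adj_irrefl by metis
  qed
  ultimately show "independent_set E (insert g Z)"
    unfolding independent_set_def using adj_irrefl by (auto simp: adj_commute)
qed

lemma card_cycle_le_if_vertex_cover:
  assumes Z: "Z \<subseteq> succ ` attachments"
    and cover: "\<And>a b. adj a b \<Longrightarrow> a \<in> insert h Z \<or> b \<in> insert h Z"
  shows "card (set C) \<le> 2 * card Z"
proof -
  have Z_C: "Z \<subseteq> set C"
    using Z succ_attachmentsD by blast
  have "succ ` (set C - Z) \<subseteq> Z"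
  proof
    fix w
    assume "w \<in> succ ` (set C - Z)"
    then obtain c where c: "c \<in> set C" "c \<notin> Z" "w = succ c"
      by blast
    then have "adj c w" "w \<in> set C"
      using is_cycle_succ [OF cycle] cycle_succ_in_set by auto
    with cover [of c w] c h_off_cycle show "w \<in> Z"
      by auto
  qed
  then have "card (set C - Z) \<le> card Z"
    using inj_on_subset [OF inj_on_cycle_succ [OF distinct_C], of "set C - Z"] finite_subset [OF Z_C]
    by (metis Diff_subset card_inj_on_le finite_set)
  then show ?thesis
    using card_Diff_subset [OF finite_subset [OF Z_C finite_set] Z_C] card_mono [OF finite_set Z_C]
    by linarith
qed

lemma V_subset_if_vertex_cover:
  assumes two: "\<And>y. y \<in> V \<Longrightarrow> \<exists>a b. a \<noteq> b \<and> adj y a \<and> adj y b"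
    and "component = {h}" and Z: "Z \<subseteq> succ ` attachments"
    and cover: "\<And>a b. adj a b \<Longrightarrow> a \<in> insert h Z \<or> b \<in> insert h Z"
  shows "V \<subseteq> insert h (set C)"
proof
  fix y
  assume "y \<in> V"
  show "y \<in> insert h (set C)"
  proof (rule ccontr)
    assume y: "y \<notin> insert h (set C)"
    obtain a b where ab: "a \<noteq> b" "adj y a" "adj y b"
      using two [OF \<open>y \<in> V\<close>] by blast
    have "y \<notin> component"
      using assms(2) y by auto
    then have "a \<noteq> h" "b \<noteq> h"
      using component_closed [OF h_in_component] ab y by (auto simp: adj_commute)
    moreover have "y \<notin> insert h Z"
      using y Z succ_attachmentsD by auto
    ultimately have "a \<in> Z" "b \<in> Z"
      using cover ab by blast+
    then obtain x1 x2 where x: "x1 \<in> attachments" "x2 \<in> attachments" "a = succ x1" "b = succ x2"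
      using Z by blast
    with ab(1) have "x1 \<noteq> x2"
      by blast
    with x \<open>y \<in> V\<close> y \<open>y \<notin> component\<close> ab show False
      using succs_of_attachments_no_common_neighbour [of x1 x2 y] by (auto simp: adj_commute)
  qed
qed

lemma independent_set_exists:
  assumes "0 < k" "k_connected V E k"
    and two: "\<And>y. y \<in> V \<Longrightarrow> \<exists>a b. a \<noteq> b \<and> adj y a \<and> adj y b"
  obtains S where "S \<subseteq> V" "card S = k + 1" "independent_set E S"
    "(\<exists>a b. adj a b \<and> a \<notin> S \<and> b \<notin> S) \<or> card V \<le> 2 * k + 1"
proof -
  have "attachments \<subseteq> set C"
    by (auto simp: attachments_def)
  then have "card (succ ` attachments) = card attachments"
    by (intro card_image inj_on_subset [OF inj_on_cycle_succ [OF distinct_C]])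
  then obtain Z where Z: "Z \<subseteq> succ ` attachments" "card Z = k"
    using card_attachments_ge [OF assms(2)] by (metis obtain_subset_with_card_n)
  note S = insert_succ_attachments [OF Z(1)]
  have "attachments \<noteq> {}"
    using card_attachments_ge [OF assms(2)] assms(1) by auto
  then obtain x0 u0 where x0: "x0 \<in> attachments" "u0 \<in> component" "adj x0 u0"
    by (auto simp: attachments_def)
  txt \<open>A second vertex \<open>g\<close> of the component gives an edge \<open>x0 u0\<close> avoiding \<open>insert g Z\<close>.\<close>
  show thesis
  proof (cases "component = {u0}")
    case False
    then obtain g where g: "g \<in> component" "g \<noteq> u0"
      using x0(2) by blast
    have "x0 \<in> set C"
      using x0(1) by (simp add: attachments_def)
    moreover have "x0 \<notin> Z"
      using x0(1) Z(1) succ_attachmentsD(2) by blast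
    moreover have "u0 \<notin> set C" "g \<notin> set C"
      using x0(2) g(1) component_off_cycle(2) by auto
    ultimately have "x0 \<notin> insert g Z" "u0 \<notin> insert g Z"
      using g(2) Z(1) succ_attachmentsD(1) by auto
    with S [OF g(1)] Z(2) x0(3) show thesis
      by (intro that [of "insert g Z"]) auto
  next
    case True
    then have "component = {h}"
      using h_in_component by auto
    show thesis
    proof (cases "\<exists>a b. adj a b \<and> a \<notin> insert h Z \<and> b \<notin> insert h Z")
      case True
      with S [OF h_in_component] Z(2) show thesis
        by (intro that [of "insert h Z"]) auto
    next
      case False
      then have cover: "a \<in> insert h Z \<or> b \<in> insert h Z" if "adj a b" for a b
        using that by blast
      have "card V \<le> card (insert h (set C))"
        using V_subset_if_vertex_cover [OF two \<open>component = {h}\<close> Z(1) cover] by (intro card_mono) auto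
      also have "\<dots> = card (set C) + 1"
        using h_off_cycle by simp
      also have "\<dots> \<le> 2 * k + 1"
        using card_cycle_le_if_vertex_cover [OF Z(1) cover] Z(2) by simp
      finally show thesis
        using S [OF h_in_component] Z(2) by (intro that [of "insert h Z"]) auto
    qed
  qed
qed

end

lemma (in sgraph) nonhamiltonian_independent_set:
  assumes "2 \<le> k" "k_connected V E k" "3 \<le> card V" "\<not> hamiltonian V E"
  obtains S where "S \<subseteq> V" "card S = k + 1" "independent_set E S"
    "(\<exists>a b. adj a b \<and> a \<notin> S \<and> b \<notin> S) \<or> card V \<le> 2 * k + 1"
proof -
  have two: "\<exists>a b. a \<noteq> b \<and> adj y a \<and> adj y b" if "y \<in> V" for y
    using two_neighbours [OF assms(1-3) that] by blast
  have "V \<noteq> {}"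
    using assms(3) by auto
  then obtain C0 where "is_cycle adj C0" "set C0 \<subseteq> V"
    using cycle_exists two by blast
  then obtain C where C: "is_cycle adj C" "set C \<subseteq> V"
    "\<And>D. is_cycle adj D \<Longrightarrow> set D \<subseteq> V \<Longrightarrow> length D \<le> length C"
    using longest_cycle_exists by blast
  have "set C \<noteq> V"
    using hamiltonian_if_spanning_cycle [OF C(1)] assms(4) by blast
  then obtain h where "h \<in> V" "h \<notin> set C"
    using C(2) by blast
  then interpret longest_cycle V E C h
    using C by unfold_locales
  have "0 < k"
    using assms(1) by simp
  with assms(2) two show thesis
    using independent_set_exists that by blast
qed

section \<open>The degree conditions\<close>

lemma mult_less_am_gm:
  fixes a s m D :: real
  assumes "0 < a" "0 \<le> s" "s \<le> m" "s < m \<or> s \<noteq> a * D"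
  shows "D * s < m^2 / (2 * a) + a * D^2 / 2"
proof -
  have am_gm: "s^2 / (2 * a) + a * D^2 / 2 = D * s + (s - a * D)^2 / (2 * a)"
    using assms(1) by (simp add: field_simps power2_eq_square)
  have "s^2 / (2 * a) \<le> m^2 / (2 * a)"
    using assms(1-3) by (simp add: divide_right_mono power_mono)
  moreover have "s^2 / (2 * a) < m^2 / (2 * a) \<or> 0 < (s - a * D)^2 / (2 * a)"
    using assms by (auto simp: divide_strict_right_mono power_strict_mono)
  moreover have "0 \<le> (s - a * D)^2 / (2 * a)"
    using assms(1) by simp
  ultimately show ?thesis
    using am_gm by linarith
qed

lemma refined_bracket_le:
  fixes K d D r m :: real
  assumes "0 \<le> K" "0 \<le> r" "0 \<le> m" "m \<le> r * D"
  shows "2 * (K + 1) * ((K + 1) * d^2 + m^2 / r) - m^2 - 2 * (K + 1) * r * D^2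
    \<le> 2 * (K + 1)^2 * d^2 - m^2"
proof -
  have "m^2 / r \<le> r * D^2"
  proof (cases "r = 0")
    case False
    have "m^2 \<le> (r * D)^2"
      using assms(3,4) by (simp add: power_mono)
    with False assms(2) show ?thesis
      by (simp add: field_simps power2_eq_square)
  qed simp
  then have "2 * (K + 1) * (m^2 / r) \<le> 2 * (K + 1) * (r * D^2)"
    using assms(1) by (intro mult_left_mono) auto
  then show ?thesis
    by (simp add: algebra_simps power2_eq_square)
qed

text \<open>The quantities of an independent set \<open>S\<close> of size \<open>K + 1\<close> in a graph with \<open>n\<close> vertices,
  \<open>m\<close> edges, degrees between \<open>d\<close> and \<open>D\<close> and indices \<open>Z\<close>, \<open>F\<close>, \<open>I\<close>; \<open>s\<close> is the degree sum over \<open>S\<close>.\<close>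
locale degree_sum_bounds =
  fixes K n d D s m Z F I :: real
  assumes K_nonneg: "0 \<le> K"
    and d_pos: "0 < d" and d_le_D: "d \<le> D" and K_less_n: "K + 1 \<le> n"
    and s_lower: "(K + 1) * d \<le> s" and s_le_m: "s \<le> m" and m_upper: "m \<le> (n - K - 1) * D"
    and s_less_m: "s < m \<or> n \<le> 2 * K + 1"
    and zagreb1_upper: "Z \<le> D * s + (n - K - 1) * D^2"
    and forgotten_lower: "n * d^3 \<le> F" "(K + 1) * d^3 + d^2 * m \<le> F"
    and inverse_lower: "n / D \<le> I"
begin

lemma m_lower: "(K + 1) * d \<le> m"
  using s_lower s_le_m by linarith

lemma m_nonneg: "0 \<le> m"
proof -
  have "0 < (K + 1) * d"
    using K_nonneg d_pos by simp
  with m_lower show ?thesis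
    by linarith
qed

lemma condition_1_fails: "Z < (n - K - 1) * D^2 + m^2 / (2 * (K + 1)) + (K + 1) * D^3 / (2 * d)"
proof -
  have "s < m \<or> s \<noteq> (K + 1) * D"
    using s_less_m
  proof
    assume "n \<le> 2 * K + 1"
    then have "(n - K - 1) * D \<le> K * D"
      using d_pos d_le_D by (intro mult_right_mono) auto
    with d_pos d_le_D s_le_m m_upper show ?thesis
      by (simp add: algebra_simps)
  qed simp
  then have "D * s < m^2 / (2 * (K + 1)) + (K + 1) * D^2 / 2"
    using K_nonneg s_lower s_le_m d_pos by (intro mult_less_am_gm) (auto intro: order_trans [rotated])
  moreover have "(K + 1) * D^2 / 2 \<le> (K + 1) * D^3 / (2 * d)"
  proof -
    have "d * D^2 \<le> D^3"
      using d_pos d_le_D by (simp add: power2_eq_square power3_eq_cube mult_right_mono)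
    then have "(K + 1) * D^2 / 2 * (2 * d) \<le> (K + 1) * D^3"
      using K_nonneg by (simp add: mult_left_mono mult.commute mult.left_commute)
    then show ?thesis
      using d_pos by (simp add: le_divide_eq)
  qed
  ultimately show ?thesis
    using zagreb1_upper by linarith
qed

lemma condition_2_fails: "(n - K - 1) * d^3 + d * (2 * (K + 1)^2 * d^2 - m^2) / (K + 1) < F"
proof -
  have gap: "(K + 1) * d^3 - d * (2 * (K + 1)^2 * d^2 - m^2) / (K + 1)
      = d * (m^2 - ((K + 1) * d)^2) / (K + 1)"
    using K_nonneg by (simp add: field_simps power2_eq_square power3_eq_cube)
  have "((K + 1) * d)^2 \<le> m^2"
    using m_lower K_nonneg d_pos by (intro power_mono) auto
  then have "0 \<le> d * (m^2 - ((K + 1) * d)^2) / (K + 1)"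
    using K_nonneg d_pos by simp
  then have le: "d * (2 * (K + 1)^2 * d^2 - m^2) / (K + 1) \<le> (K + 1) * d^3"
    using gap by linarith
  show ?thesis
    using s_less_m
  proof
    assume "s < m"
    with K_nonneg d_pos s_lower have "((K + 1) * d)^2 < m^2"
      by (intro power_strict_mono) auto
    then have "0 < d * (m^2 - ((K + 1) * d)^2) / (K + 1)"
      using K_nonneg d_pos by simp
    then have "d * (2 * (K + 1)^2 * d^2 - m^2) / (K + 1) < (K + 1) * d^3"
      using gap by linarith
    moreover have "n * d^3 = (n - K - 1) * d^3 + (K + 1) * d^3"
      by (simp add: algebra_simps)
    ultimately show ?thesis
      using forgotten_lower(1) by linarith
  next
    assume "n \<le> 2 * K + 1"
    then have "(n - K - 1) * d^3 < (K + 1) * d^3"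
      using d_pos by (intro mult_strict_right_mono) auto
    moreover have "d^2 * ((K + 1) * d) \<le> d^2 * m"
      using m_lower by (simp add: mult_left_mono)
    then have "(K + 1) * d^3 \<le> d^2 * m"
      by (simp add: power2_eq_square power3_eq_cube algebra_simps)
    ultimately show ?thesis
      using le forgotten_lower(2) by linarith
  qed
qed

lemma condition_3_fails:
  "(n - K - 1) * d^3 + d / (K + 1) * (2 * (K + 1) * ((K + 1) * d^2 + m^2 / (n - K - 1))
    - m^2 - 2 * (K + 1) * (n - K - 1) * D^2) < F"
proof -
  have "d / (K + 1) * (2 * (K + 1) * ((K + 1) * d^2 + m^2 / (n - K - 1))
      - m^2 - 2 * (K + 1) * (n - K - 1) * D^2) \<le> d / (K + 1) * (2 * (K + 1)^2 * d^2 - m^2)"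
    using refined_bracket_le [of K "n - K - 1" m D d] K_nonneg d_pos K_less_n m_nonneg m_upper
    by (intro mult_left_mono) auto
  with condition_2_fails show ?thesis
    by simp
qed

lemma numerator_less: "2 * (K + 1)^2 * d^2 - m^2 < (K + 1)^2 * D^2"
proof -
  have "(K + 1)^2 * d^2 < (K + 1)^2 * D^2 \<or> (K + 1)^2 * d^2 < m^2"
    using s_less_m
  proof
    assume "s < m"
    with K_nonneg d_pos s_lower have "((K + 1) * d)^2 < m^2"
      by (intro power_strict_mono) auto
    then show ?thesis
      by (simp add: power_mult_distrib)
  next
    assume "n \<le> 2 * K + 1"
    then have "(n - K - 1) * D \<le> K * D"
      using d_pos d_le_D by (intro mult_right_mono) auto
    with m_lower m_upper have "K * d + d \<le> K * D"
      by (simp add: algebra_simps)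
    have "d < D"
    proof (rule ccontr)
      assume "\<not> d < D"
      then have "K * D \<le> K * d"
        using K_nonneg by (intro mult_left_mono) auto
      with \<open>K * d + d \<le> K * D\<close> d_pos show False
        by linarith
    qed
    then have "d^2 < D^2"
      using d_pos by (intro power_strict_mono) auto
    then show ?thesis
      using K_nonneg by simp
  qed
  moreover have "(K + 1)^2 * d^2 \<le> (K + 1)^2 * D^2"
    using d_pos d_le_D by (intro mult_left_mono power_mono) auto
  moreover have "(K + 1)^2 * d^2 \<le> m^2"
    using m_lower K_nonneg d_pos power_mono [of "(K + 1) * d" m 2] by (simp add: power_mult_distrib)
  ultimately show ?thesis
    by linarith
qed

lemma condition_4_fails: "(n - K - 1) / D + (2 * (K + 1)^2 * d^2 - m^2) / ((K + 1) * D^3) < I"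
proof -
  have "D \<noteq> 0" "(K + 1) * D^3 \<noteq> 0"
    using K_nonneg d_pos d_le_D by auto
  then have "(K + 1)^2 * D^2 = (K + 1) / D * ((K + 1) * D^3)"
    by (simp add: field_simps power2_eq_square power3_eq_cube)
  then have "(K + 1)^2 * D^2 / ((K + 1) * D^3) = (K + 1) / D"
    using nonzero_mult_div_cancel_right [OF \<open>(K + 1) * D^3 \<noteq> 0\<close>] by simp
  moreover have "0 < (K + 1) * D^3"
    using K_nonneg d_pos d_le_D by simp
  ultimately have "(2 * (K + 1)^2 * d^2 - m^2) / ((K + 1) * D^3) < (K + 1) / D"
    using divide_strict_right_mono [OF numerator_less] by metis
  moreover have "n / D = (n - K - 1) / D + (K + 1) / D"
    by (simp add: diff_divide_distrib add_divide_distrib)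
  ultimately show ?thesis
    using inverse_lower by linarith
qed

lemma condition_5_fails:
  "(n - K - 1) / D + 1 / ((K + 1) * D^3) * (2 * (K + 1) * ((K + 1) * d^2 + m^2 / (n - K - 1))
    - m^2 - 2 * (K + 1) * (n - K - 1) * D^2) < I"
proof -
  have "1 / ((K + 1) * D^3) * (2 * (K + 1) * ((K + 1) * d^2 + m^2 / (n - K - 1))
      - m^2 - 2 * (K + 1) * (n - K - 1) * D^2) \<le> 1 / ((K + 1) * D^3) * (2 * (K + 1)^2 * d^2 - m^2)"
    using refined_bracket_le [of K "n - K - 1" m D d] K_nonneg d_pos d_le_D K_less_n m_nonneg m_upper
    by (intro mult_left_mono) auto
  with condition_4_fails show ?thesis
    by simp
qed

end

lemma (in sgraph) nonhamiltonian_degree_sum_bounds: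
  assumes "2 \<le> k" "k_connected V E k" "3 \<le> card V" "\<not> hamiltonian V E"
  defines "n \<equiv> real (card V)" and "m \<equiv> real (card E)" and "\<delta> \<equiv> real (min_degree V E)"
    and "\<Delta> \<equiv> real (max_degree V E)" and "K \<equiv> real k"
  shows "\<exists>s. degree_sum_bounds K n \<delta> \<Delta> s m (zagreb1 V E) (forgotten_index V E) (inverse_degree V E)"
proof -
  obtain S where S: "S \<subseteq> V" "card S = k + 1" "independent_set E S"
    and sparse: "(\<exists>a b. {a, b} \<in> E \<and> a \<notin> S \<and> b \<notin> S) \<or> card V \<le> 2 * k + 1"
    by (rule nonhamiltonian_independent_set [OF assms(1-4)])
  define s where "s = (\<Sum>u\<in>S. real (degree V E u))"
  have card_S: "real (card S) = K + 1" "K + 1 \<le> n" "real (card (V - S)) = n - K - 1"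
    using S(1,2) card_Diff_subset [OF finite_subset [OF S(1) finite_V] S(1)] card_mono [OF finite_V S(1)]
    by (simp_all add: n_def K_def of_nat_diff)
  have "V \<noteq> {}"
    using assms(3) by auto
  then have degrees: "0 < \<delta>" "\<delta> \<le> \<Delta>"
    using two_le_min_degree [OF assms(1-3)] min_degree_le_max_degree by (auto simp: \<delta>_def \<Delta>_def)
  have s: "(K + 1) * \<delta> \<le> s" "s \<le> m" "m \<le> (n - K - 1) * \<Delta>"
    using degree_sum_ge [OF S(1)] degree_sum_independent_le [OF S(1,3)]
      card_edges_le_degree_sum_compl [OF S(3)] degree_sum_le [of "V - S"]
    by (auto simp: s_def m_def \<delta>_def \<Delta>_def card_S(1) simp flip: card_S(3))
  have strict: "s < m \<or> n \<le> 2 * K + 1"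
    using sparse degree_sum_independent_less [OF S(1,3)]
    by (auto simp: s_def m_def n_def K_def simp flip: of_nat_mult of_nat_Suc)
  have indices: "zagreb1 V E \<le> \<Delta> * s + (n - K - 1) * \<Delta>^2"
      "n * \<delta>^3 \<le> forgotten_index V E" "(K + 1) * \<delta>^3 + \<delta>^2 * m \<le> forgotten_index V E"
      "n / \<Delta> \<le> inverse_degree V E"
    using zagreb1_le [OF S(1)] forgotten_index_ge_card forgotten_index_ge_independent [OF S(1,3)]
      inverse_degree_ge degrees(1)
    by (simp_all add: s_def n_def m_def \<delta>_def \<Delta>_def card_S)
  have "0 \<le> K"
    by (simp add: K_def)
  then show ?thesis
    unfolding degree_sum_bounds_def using degrees s strict indices card_S(2) by blast
qed

theorem theorem2:
  fixes V :: "'a set" and E :: "'a set set" and k :: nat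
  assumes graph: "simple_graph V E"
    and k2: "k \<ge> 2"
    and kconn: "k_connected V E k"
    and n3: "card V \<ge> 3"
  defines "n \<equiv> real (card V)"
    and "m \<equiv> real (card E)"
    and "\<delta> \<equiv> real (min_degree V E)"
    and "\<Delta> \<equiv> real (max_degree V E)"
    and "K \<equiv> real k"
  assumes cond:
    "zagreb1 V E \<ge> (n - K - 1) * \<Delta>^2 + m^2 / (2 * (K + 1)) + (K + 1) * \<Delta>^3 / (2 * \<delta>)
     \<or> forgotten_index V E \<le> (n - K - 1) * \<delta>^3
          + \<delta> * (2 * (K + 1)^2 * \<delta>^2 - m^2) / (K + 1)
     \<or> forgotten_index V E \<le> (n - K - 1) * \<delta>^3
          + \<delta> / (K + 1) * (2 * (K + 1) * ((K + 1) * \<delta>^2 + m^2 / (n - K - 1))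
                            - m^2 - 2 * (K + 1) * (n - K - 1) * \<Delta>^2)
     \<or> inverse_degree V E \<le> (n - K - 1) / \<Delta>
          + (2 * (K + 1)^2 * \<delta>^2 - m^2) / ((K + 1) * \<Delta>^3)
     \<or> inverse_degree V E \<le> (n - K - 1) / \<Delta>
          + 1 / ((K + 1) * \<Delta>^3) * (2 * (K + 1) * ((K + 1) * \<delta>^2 + m^2 / (n - K - 1))
                            - m^2 - 2 * (K + 1) * (n - K - 1) * \<Delta>^2)"
  shows "hamiltonian V E"
proof (rule ccontr)
  assume "\<not> hamiltonian V E"
  interpret sgraph V E
    by (rule sgraph.intro) (rule graph)
  have "\<exists>s. degree_sum_bounds K n \<delta> \<Delta> s m (zagreb1 V E) (forgotten_index V E) (inverse_degree V E)"
    unfolding n_def m_def \<delta>_def \<Delta>_def K_def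
    by (rule nonhamiltonian_degree_sum_bounds [OF k2 kconn n3 \<open>\<not> hamiltonian V E\<close>])
  then obtain s
    where bounds: "degree_sum_bounds K n \<delta> \<Delta> s m (zagreb1 V E) (forgotten_index V E) (inverse_degree V E)" ..
  with cond show False
    using degree_sum_bounds.condition_1_fails [OF bounds] degree_sum_bounds.condition_2_fails [OF bounds]
      degree_sum_bounds.condition_3_fails [OF bounds] degree_sum_bounds.condition_4_fails [OF bounds]
      degree_sum_bounds.condition_5_fails [OF bounds]
    by (meson not_le)
qed

end
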